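(* Let $d\ge1$ and let $P$ be a probability distribution on $\{0,1\}^d$ with $P(\nu)>0$ for all $\nu\in\{0,1\}^d$. For each $\omega\in\{0,1\}^d$, let $A_\omega$ be the $(2^d-1)\times d$ matrix with rows indexed by $\nu\in\{0,1\}^d\setminus\{\omega\}$ and entries $A_\omega(\nu,i)=1$ if $\nu_i\ne\omega_i$ and $0$ otherwise, let $b_\omega(\nu)=\ln(P(\nu)/P(\omega))$, let $\mathcal{Q}_\omega:=\{y\in\mathbb{R}^d\mid A_\omega y\le b_\omega\}$, and let $f_\omega(y):=\prod_{i=1}^d(1+e^{y_i})$. Then for each $\omega\in\{0,1\}^d$, the maximum $\max_{y\in\mathcal{Q}_\omega}f_\omega(y)$ can only be attained at a vertex of $\mathcal{Q}_\omega$.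
   Context: A vertex of $\mathcal{Q}_\omega$ is a point $y\in\mathcal{Q}_\omega$ such that $A'_\omega y=b'_\omega$ for some invertible $d\times d$ submatrix $A'_\omega$ of $A_\omega$ consisting of $d$ of its rows, with $b'_\omega$ the corresponding entries of $b_\omega$. (Via $y_i=(1-2\omega_i)\ln(q_i/(1-q_i))$, this polyhedron is the image of $\{q\in(0,1)^d: P(\omega)f_\omega(q)\le P(\nu)f_\nu(q)\ \forall\nu\}$, where $f_\omega(q)=\prod_i q_i^{-\omega_i}(1-q_i)^{\omega_i-1}$.) *)

theory Defs
  imports "HOL-Analysis.Analysis"
begin

text \<open>Binary vectors in {0,1}^d are functions 'd \<Rightarrow> bool (True = 1), 'd a finite
  index type with CARD('d) = d \<ge> 1. Real vectors in R^d are real^'d.\<close>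

definition A_mat :: "('d \<Rightarrow> bool) \<Rightarrow> ('d \<Rightarrow> bool) \<Rightarrow> 'd \<Rightarrow> real" where
  "A_mat \<omega> \<nu> i = (if \<nu> i \<noteq> \<omega> i then 1 else 0)"

definition b_vec :: "(('d \<Rightarrow> bool) \<Rightarrow> real) \<Rightarrow> ('d \<Rightarrow> bool) \<Rightarrow> ('d \<Rightarrow> bool) \<Rightarrow> real" where
  "b_vec P \<omega> \<nu> = ln (P \<nu> / P \<omega>)"

definition Q_poly :: "(('d::finite \<Rightarrow> bool) \<Rightarrow> real) \<Rightarrow> ('d \<Rightarrow> bool) \<Rightarrow> (real^'d) set" where
  "Q_poly P \<omega> = {y. \<forall>\<nu>. \<nu> \<noteq> \<omega> \<longrightarrow> (\<Sum>i\<in>UNIV. A_mat \<omega> \<nu> i * y $ i) \<le> b_vec P \<omega> \<nu>}"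

definition f_obj :: "real^'d::finite \<Rightarrow> real" where
  "f_obj y = (\<Prod>i\<in>UNIV. 1 + exp (y $ i))"

definition is_vertex :: "(('d::finite \<Rightarrow> bool) \<Rightarrow> real) \<Rightarrow> ('d \<Rightarrow> bool) \<Rightarrow> real^'d \<Rightarrow> bool" where
  "is_vertex P \<omega> y \<longleftrightarrow> y \<in> Q_poly P \<omega> \<and>
     (\<exists>r :: 'd \<Rightarrow> ('d \<Rightarrow> bool). inj r \<and> (\<forall>k. r k \<noteq> \<omega>) \<and>
        invertible (\<chi> k i. A_mat \<omega> (r k) i) \<and>
        (\<chi> k i. A_mat \<omega> (r k) i) *v y = (\<chi> k. b_vec P \<omega> (r k)))"

end

theory Submission
  imports Defs
begin

text \<open>The objective is strictly midpoint log-convex: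
  \<open>f(y)\<^sup>2 < f(y + v) f(y - v)\<close> for \<open>v \<noteq> 0\<close>, since each factor satisfies
  \<open>(1 + exp a)\<^sup>2 < (1 + exp (a + s))(1 + exp (a - s))\<close> for \<open>s \<noteq> 0\<close>.
  If the constraints active at a maximiser \<open>y\<close> did not span \<open>\<real>\<^sup>d\<close>, a nonzero \<open>v\<close>
  orthogonal to them would keep \<open>y \<plusminus> t v\<close> feasible for small \<open>t > 0\<close>, and then
  \<open>f(y)\<^sup>2 < f(y + t v) f(y - t v) \<le> f(y)\<^sup>2\<close>. So the active rows have rank \<open>d\<close>,
  and \<open>d\<close> independent ones among them form the required invertible submatrix.\<close>

lemma one_plus_exp_sq_less:
  fixes a s :: real
  assumes "s \<noteq> 0"
  shows "(1 + exp a)\<^sup>2 < (1 + exp (a + s)) * (1 + exp (a - s))"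
proof -
  have "(1 + exp (a + s)) * (1 + exp (a - s)) = (1 + exp a)\<^sup>2 + exp a * (exp s - 1)\<^sup>2 / exp s"
    by (simp add: exp_add exp_diff field_simps power2_eq_square)
  moreover have "0 < exp a * (exp s - 1)\<^sup>2 / exp s"
    using assms by simp
  ultimately show ?thesis
    by linarith
qed

lemma one_plus_exp_sq_le:
  fixes a s :: real
  shows "(1 + exp a)\<^sup>2 \<le> (1 + exp (a + s)) * (1 + exp (a - s))"
proof (cases "s = 0")
  case False
  then show ?thesis
    using one_plus_exp_sq_less[of s a] by linarith
qed (simp add: power2_eq_square)

lemma f_obj_pos: "0 < f_obj y"
  unfolding f_obj_def by (intro prod_pos) (simp add: add_pos_pos)

lemma f_obj_sq_less:
  fixes y v :: "real^'d::finite"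
  assumes "v \<noteq> 0"
  shows "f_obj y ^ 2 < f_obj (y + v) * f_obj (y - v)"
proof -
  obtain j where j: "v $ j \<noteq> 0"
    using assms by (metis vec_eq_iff zero_index)
  define F where "F i = (1 + exp (y $ i))\<^sup>2" for i
  define G where "G i = (1 + exp (y $ i + v $ i)) * (1 + exp (y $ i - v $ i))" for i
  have "f_obj y ^ 2 = (\<Prod>i\<in>UNIV. F i)"
    unfolding f_obj_def F_def by (simp add: prod_power_distrib)
  also have "\<dots> = F j * (\<Prod>i\<in>UNIV - {j}. F i)"
    by (simp add: prod.remove)
  also have "\<dots> < G j * (\<Prod>i\<in>UNIV - {j}. G i)"
  proof (rule mult_less_le_imp_less)
    show "F j < G j"
      unfolding F_def G_def using one_plus_exp_sq_less[OF j] .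
    show "(\<Prod>i\<in>UNIV - {j}. F i) \<le> (\<Prod>i\<in>UNIV - {j}. G i)"
      unfolding F_def G_def by (intro prod_mono) (simp add: one_plus_exp_sq_le)
    show "0 < (\<Prod>i\<in>UNIV - {j}. F i)"
      unfolding F_def by (intro prod_pos zero_less_power add_pos_pos) simp_all
  qed (simp add: F_def)
  also have "\<dots> = (\<Prod>i\<in>UNIV. G i)"
    by (simp add: prod.remove)
  also have "\<dots> = f_obj (y + v) * f_obj (y - v)"
    unfolding f_obj_def G_def by (simp add: prod.distrib)
  finally show ?thesis .
qed

lemma polyhedron_two_sided_step:
  fixes a :: "'i \<Rightarrow> 'a::real_inner"
  assumes "finite I"
    and feasible: "\<forall>i\<in>I. a i \<bullet> y \<le> b i"
    and orth_active: "\<And>i. i \<in> I \<Longrightarrow> a i \<bullet> y = b i \<Longrightarrow> a i \<bullet> v = 0"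
  obtains t where "0 < t" and "\<forall>i\<in>I. a i \<bullet> (y + t *\<^sub>R v) \<le> b i \<and> a i \<bullet> (y - t *\<^sub>R v) \<le> b i"
proof -
  have "\<forall>\<^sub>F t in at_right 0. a i \<bullet> y + t * (a i \<bullet> v) \<le> b i \<and> a i \<bullet> y - t * (a i \<bullet> v) \<le> b i"
    if "i \<in> I" for i
  proof (cases "a i \<bullet> y = b i")
    case True
    then show ?thesis
      using orth_active that by simp
  next
    case False
    with feasible that have slack: "a i \<bullet> y < b i"
      by fastforce
    have "((\<lambda>t. a i \<bullet> y + t * (a i \<bullet> v)) \<longlongrightarrow> a i \<bullet> y) (at_right 0)"
      and "((\<lambda>t. a i \<bullet> y - t * (a i \<bullet> v)) \<longlongrightarrow> a i \<bullet> y) (at_right 0)"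
      by (auto intro!: tendsto_eq_intros)
    from order_tendstoD(2)[OF this(1) slack] order_tendstoD(2)[OF this(2) slack]
    show ?thesis
      by eventually_elim simp
  qed
  then have "\<forall>\<^sub>F t in at_right 0. 0 < t \<and>
      (\<forall>i\<in>I. a i \<bullet> y + t * (a i \<bullet> v) \<le> b i \<and> a i \<bullet> y - t * (a i \<bullet> v) \<le> b i)"
    by (intro eventually_conj eventually_at_right_less eventually_ball_finite \<open>finite I\<close>) blast
  then obtain t :: real where "0 < t"
    and "\<forall>i\<in>I. a i \<bullet> y + t * (a i \<bullet> v) \<le> b i \<and> a i \<bullet> y - t * (a i \<bullet> v) \<le> b i"
    using eventually_happens'[OF trivial_limit_at_right_real] by blast
  then show thesis
    by (intro that[of t]) (simp_all add: inner_add_right inner_diff_right)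
qed

lemma active_constraints_full_dim_at_maximum:
  fixes a :: "'i \<Rightarrow> 'a::euclidean_space" and f :: "'a \<Rightarrow> real"
  assumes "finite I"
    and feasible: "\<forall>i\<in>I. a i \<bullet> y \<le> b i"
    and maximal: "\<And>z. \<forall>i\<in>I. a i \<bullet> z \<le> b i \<Longrightarrow> f z \<le> f y"
    and nonneg: "\<And>z. 0 \<le> f z"
    and log_convex: "\<And>v. v \<noteq> 0 \<Longrightarrow> f y ^ 2 < f (y + v) * f (y - v)"
  shows "dim (a ` {i\<in>I. a i \<bullet> y = b i}) = DIM('a)"
proof (rule ccontr)
  assume "dim (a ` {i\<in>I. a i \<bullet> y = b i}) \<noteq> DIM('a)"
  then have "dim (a ` {i\<in>I. a i \<bullet> y = b i}) < DIM('a)"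
    using dim_subset_UNIV[of "a ` {i\<in>I. a i \<bullet> y = b i}"] by linarith
  then obtain v where "v \<noteq> 0"
    and orth: "\<And>x. x \<in> span (a ` {i\<in>I. a i \<bullet> y = b i}) \<Longrightarrow> orthogonal v x"
    using orthogonal_to_subspace_exists by blast
  have orth_active: "a i \<bullet> v = 0" if "i \<in> I" and "a i \<bullet> y = b i" for i
  proof -
    have "a i \<in> span (a ` {i\<in>I. a i \<bullet> y = b i})"
      using that by (intro span_base) auto
    then show ?thesis
      using orth orthogonal_def inner_commute by metis
  qed
  obtain t where "0 < t"
    and "\<forall>i\<in>I. a i \<bullet> (y + t *\<^sub>R v) \<le> b i \<and> a i \<bullet> (y - t *\<^sub>R v) \<le> b i"
    by (rule polyhedron_two_sided_step[OF \<open>finite I\<close> feasible orth_active])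
  then have "f (y + t *\<^sub>R v) * f (y - t *\<^sub>R v) \<le> f y * f y"
    by (intro mult_mono maximal nonneg) auto
  moreover have "f y ^ 2 < f (y + t *\<^sub>R v) * f (y - t *\<^sub>R v)"
    using \<open>0 < t\<close> \<open>v \<noteq> 0\<close> by (intro log_convex) simp
  ultimately show False
    by (simp add: power2_eq_square)
qed

lemma full_dim_rows_contain_invertible:
  fixes a :: "'i \<Rightarrow> real^'n"
  assumes "dim (a ` S) = CARD('n)"
  obtains r :: "'n \<Rightarrow> 'i" where "inj r" and "\<forall>k. r k \<in> S" and "invertible (\<chi> k. a (r k))"
proof -
  obtain B where "B \<subseteq> a ` S" and "independent B" and "card B = CARD('n)"
    using basis_exists[of "a ` S"] assms by metis
  moreover have "finite B"
    using \<open>independent B\<close> by (rule finiteI_independent)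
  ultimately obtain g where g: "bij_betw g (UNIV :: 'n set) B"
    using finite_same_card_bij[of "UNIV :: 'n set" B] by auto
  then have "g k \<in> a ` S" for k
    using \<open>B \<subseteq> a ` S\<close> by (auto simp: bij_betw_def)
  define r where "r k = inv_into S a (g k)" for k
  have r: "r k \<in> S \<and> a (r k) = g k" for k
    using \<open>g k \<in> a ` S\<close> by (simp add: r_def inv_into_into f_inv_into_f)
  have "inj r"
    by (metis r g bij_betw_imp_inj_on injI inj_onD UNIV_I)
  moreover have "rows (\<chi> k. a (r k)) = B"
    using g by (auto simp: rows_def row_def r bij_betw_def)
  then have "rank (\<chi> k. a (r k)) = CARD('n)"
    using \<open>independent B\<close> \<open>card B = CARD('n)\<close> by (simp add: row_rank_def dim_eq_card_independent)
  then have "invertible (\<chi> k. a (r k))"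
    by (simp add: invertible_det_nz det_eq_0_rank)
  ultimately show thesis
    using r that by blast
qed

definition A_row :: "('d \<Rightarrow> bool) \<Rightarrow> ('d \<Rightarrow> bool) \<Rightarrow> real^'d::finite" where
  "A_row \<omega> \<nu> = (\<chi> i. A_mat \<omega> \<nu> i)"

lemma A_row_inner: "A_row \<omega> \<nu> \<bullet> z = (\<Sum>i\<in>UNIV. A_mat \<omega> \<nu> i * z $ i)"
  by (simp add: A_row_def inner_vec_def)

lemma Q_poly_eq: "Q_poly P \<omega> = {z. \<forall>\<nu>\<in>-{\<omega>}. A_row \<omega> \<nu> \<bullet> z \<le> b_vec P \<omega> \<nu>}"
  by (auto simp: Q_poly_def A_row_inner)

theorem theorem1:
  fixes P :: "('d::finite \<Rightarrow> bool) \<Rightarrow> real" and \<omega> :: "'d \<Rightarrow> bool" and y :: "real^'d"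
  assumes "\<forall>\<nu>. P \<nu> > 0"
    and "(\<Sum>\<nu>\<in>UNIV. P \<nu>) = 1"
    and "y \<in> Q_poly P \<omega>"
    and "\<forall>z\<in>Q_poly P \<omega>. f_obj z \<le> f_obj y"
  shows "is_vertex P \<omega> y"
proof -
  let ?active = "{\<nu>\<in>-{\<omega>}. A_row \<omega> \<nu> \<bullet> y = b_vec P \<omega> \<nu>}"
  have "dim (A_row \<omega> ` ?active) = DIM(real^'d)"
    using assms(3,4) unfolding Q_poly_eq
    by (intro active_constraints_full_dim_at_maximum[where f = f_obj])
       (auto intro: less_imp_le f_obj_pos f_obj_sq_less)
  then obtain r :: "'d \<Rightarrow> ('d \<Rightarrow> bool)" where "inj r" and r_active: "\<forall>k. r k \<in> ?active"
    and "invertible (\<chi> k. A_row \<omega> (r k))"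
    by (auto elim: full_dim_rows_contain_invertible)
  moreover have "(\<chi> k. A_row \<omega> (r k)) *v y = (\<chi> k. b_vec P \<omega> (r k))"
    using r_active by (simp add: vec_eq_iff matrix_vector_mult_def A_row_def inner_vec_def)
  ultimately show ?thesis
    using assms(3) r_active unfolding is_vertex_def A_row_def by auto
qed

end
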